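(* The integer sequence $(PPL_t(n))_{n\geq 0}$ is $4$-regular.
   Context: The Thue-Morse word $t=t[1]t[2]\cdots=abbabaabbaababba\cdots$ is the fixed point starting with $a$ of the morphism $a\mapsto abba,\ b\mapsto baab$. A palindrome is a word $p=p[1]\cdots p[n]$ with $p[i]=p[n-i+1]$ for all $i$. $PPL_t(n)$ is the minimal number of nonempty palindromes whose concatenation equals the prefix of $t$ of length $n$, with $PPL_t(0)=0$. An integer sequence $(a(n))_{n\geq0}$ is called $k$-regular if there exist finitely many integer sequences $(a_1(n)),\ldots,(a_s(n))$ such that for every integer $i\geq 0$ and every $0\leq b<k^i$ there exist $c_1,\ldots,c_s\in\mathbb Z$ with $a(k^i n+b)=\sum_{j=1}^s c_j a_j(n)$ for all $n\geq 0$. *)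

theory Defs
  imports Main
begin

text \<open>Letters: a = False, b = True. The Thue-Morse morphism a -> abba, b -> baab.\<close>
definition tm_morph :: "bool list \<Rightarrow> bool list" where
  "tm_morph w = concat (map (\<lambda>c. [c, \<not> c, \<not> c, c]) w)"

text \<open>The Thue-Morse word, 0-indexed: thue_morse i = t[i+1]. It is the fixed point of the
  morphism starting with a; its length-(4^k) prefix is tm_morph^k applied to [a], and
  tm_morph^(i+1) [a] has length 4^(i+1) > i.\<close>
definition thue_morse :: "nat \<Rightarrow> bool" where
  "thue_morse i = (tm_morph ^^ Suc i) [False] ! i"

definition tm_prefix :: "nat \<Rightarrow> bool list" where
  "tm_prefix n = map thue_morse [0..<n]"

definition palindrome :: "'a list \<Rightarrow> bool" where
  "palindrome p \<longleftrightarrow> rev p = p"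

definition pal_length :: "'a list \<Rightarrow> nat" where
  "pal_length w = (LEAST k. \<exists>ps. length ps = k \<and> concat ps = w \<and>
                       (\<forall>p\<in>set ps. p \<noteq> [] \<and> palindrome p))"

definition PPL_t :: "nat \<Rightarrow> int" where
  "PPL_t n = int (pal_length (tm_prefix n))"

definition k_regular :: "nat \<Rightarrow> (nat \<Rightarrow> int) \<Rightarrow> bool" where
  "k_regular k a \<longleftrightarrow> (\<exists>S :: (nat \<Rightarrow> int) set. finite S \<and>
      (\<forall>i b. b < k ^ i \<longrightarrow>
         (\<exists>c :: (nat \<Rightarrow> int) \<Rightarrow> int. \<forall>n. a (k ^ i * n + b) = (\<Sum>s\<in>S. c s * s n))))"

end

theory Submission
  imports Defs
begin

(*
  Let f be given by f 0 = 0, f (4n) = f n, f (4n+1) = f n + 1,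
  f (4n+2) = min (f n) (f (n+1)) + 2 and f (4n+3) = f (n+1) + 1 (ppl_rec below).

  Since an optimal factorization of t[0..e) ends with a palindromic factor t[s..e), PPL_t is
  the least function vanishing at 0 that grows by at most one across every palindromic factor.
  The recursion f has this property: a palindrome of t of length at least 4 has even length
  and s + e divisible by 4, so it is the image under the morphism of a shorter palindrome
  (up to trimming its ends), and induction applies. Hence f <= PPL_t. Conversely, images under
  the morphism of the last palindrome of an optimal factorization of t[0..n) or t[0..n+1)
  bound PPL_t by each of the recurrences of f, so PPL_t = f.

  The increment f (n+1) - f n lies in {-1, 0, 1}, and both f (4n+r) - f n and the increment at
  4n+r are functions of the increment at n. Iterating, f (4^i n + b) is f n plus a function of
  the increment at n, i.e. a linear combination of f and the three indicator sequences of the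
  increment.
*)

section \<open>The Thue--Morse word\<close>

lemma tm_morph_Nil [simp]: "tm_morph [] = []"
  by (simp add: tm_morph_def)

lemma tm_morph_Cons [simp]: "tm_morph (c # w) = [c, \<not> c, \<not> c, c] @ tm_morph w"
  by (simp add: tm_morph_def)

lemma length_tm_morph [simp]: "length (tm_morph w) = 4 * length w"
  by (induction w) auto

lemma nth_tm_morph:
  assumes "k < length w" "r < 4"
  shows "tm_morph w ! (4 * k + r) = [w ! k, \<not> w ! k, \<not> w ! k, w ! k] ! r"
  using assms
proof (induction w arbitrary: k)
  case (Cons c w)
  show ?case
  proof (cases k)
    case 0
    from \<open>r < 4\<close> consider "r = 0" | "r = 1" | "r = 2" | "r = 3" by linarith
    then show ?thesis using 0 by cases simp_all
  next
    case (Suc k')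
    with Cons show ?thesis by (simp add: nth_append)
  qed
qed simp

definition tm_word :: "nat \<Rightarrow> bool list" where
  "tm_word n = (tm_morph ^^ n) [False]"

lemma tm_word_Suc: "tm_word (Suc n) = tm_morph (tm_word n)"
  by (simp add: tm_word_def)

lemma length_tm_word: "length (tm_word n) = 4 ^ n"
  by (induction n) (simp_all add: tm_word_def)

lemma tm_word_Suc_extends: "\<exists>v. tm_word (Suc n) = tm_word n @ v"
proof (induction n)
  case 0
  show ?case by (simp add: tm_word_def)
next
  case (Suc n)
  then obtain v where "tm_word (Suc n) = tm_word n @ v" by blast
  then have "tm_word (Suc (Suc n)) = tm_word (Suc n) @ tm_morph v"
    by (simp add: tm_word_Suc tm_morph_def)
  then show ?case by blast
qed

lemma nth_tm_word_mono:
  assumes "n \<le> m" "i < 4 ^ n"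
  shows "tm_word m ! i = tm_word n ! i"
  using assms(1)
proof (induction m rule: dec_induct)
  case (step m)
  obtain v where "tm_word (Suc m) = tm_word m @ v"
    using tm_word_Suc_extends by blast
  moreover have "i < length (tm_word m)"
    using assms(2) power_increasing[OF step.hyps(1), of "4::nat"]
    by (simp add: length_tm_word less_le_trans)
  ultimately show ?case using step.IH by (simp add: nth_append)
qed simp

lemma less_four_power_Suc: "n < 4 ^ Suc (n :: nat)"
  using less_exp[of n] power_mono[of "2::nat" 4 n] by (simp del: less_exp)

lemma thue_morse_eq_nth_tm_word:
  assumes "i < 4 ^ m"
  shows "thue_morse i = tm_word m ! i"
  using assms less_four_power_Suc[of i]
    nth_tm_word_mono[of "Suc i" "max m (Suc i)" i] nth_tm_word_mono[of m "max m (Suc i)" i]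
  by (simp add: thue_morse_def tm_word_def)

lemma thue_morse_4k_plus:
  assumes "r < 4"
  shows "thue_morse (4 * k + r) =
    [thue_morse k, \<not> thue_morse k, \<not> thue_morse k, thue_morse k] ! r"
proof -
  have k: "k < 4 ^ Suc k"
    by (rule less_four_power_Suc)
  then have "thue_morse (4 * k + r) = tm_word (Suc (Suc k)) ! (4 * k + r)"
    using assms by (intro thue_morse_eq_nth_tm_word) simp
  also have "\<dots> = tm_morph (tm_word (Suc k)) ! (4 * k + r)"
    by (simp only: tm_word_Suc)
  also have "\<dots> = [tm_word (Suc k) ! k, \<not> tm_word (Suc k) ! k, \<not> tm_word (Suc k) ! k,
      tm_word (Suc k) ! k] ! r"
    using assms k by (intro nth_tm_morph) (simp_all add: length_tm_word)
  finally show ?thesis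
    using thue_morse_eq_nth_tm_word[OF k] by simp
qed

lemma thue_morse_4k: "thue_morse (4 * k) = thue_morse k"
  and thue_morse_4k_1: "thue_morse (4 * k + 1) = (\<not> thue_morse k)"
  and thue_morse_4k_2: "thue_morse (4 * k + 2) = (\<not> thue_morse k)"
  and thue_morse_4k_3: "thue_morse (4 * k + 3) = thue_morse k"
  using thue_morse_4k_plus[of 0 k] thue_morse_4k_plus[of 1 k]
    thue_morse_4k_plus[of 2 k] thue_morse_4k_plus[of 3 k]
  by simp_all

(* simp normalises 4 * k + 1 to Suc (4 * k), so the rules are also needed in that form *)
lemmas thue_morse_simps [simp] =
  thue_morse_4k thue_morse_4k_1 thue_morse_4k_2 thue_morse_4k_3
  thue_morse_4k_1[simplified] thue_morse_4k_2[simplified]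
  thue_morse_4k_3[unfolded numeral_3_eq_3, simplified]

lemma thue_morse_2k_and_2k_1:
  "thue_morse (2 * k) = thue_morse k \<and> thue_morse (2 * k + 1) = (\<not> thue_morse k)"
proof (induction k rule: less_induct)
  case (less k)
  consider q where "k = 2 * q" | q where "k = 2 * q + 1"
    by (metis oddE evenE)
  then show ?case
  proof cases
    case (1 q)
    have "thue_morse (2 * q) = thue_morse q"
      using less[of q] 1 by (cases "q = 0") auto
    then show ?thesis
      using 1 thue_morse_4k[of q] thue_morse_4k_1[of q] by (simp add: mult.assoc)
  next
    case (2 q)
    have "2 * k = 4 * q + 2" "2 * k + 1 = 4 * q + 3"
      using 2 by simp_all
    moreover have "thue_morse k = (\<not> thue_morse q)"
      using less[of q] 2 by simp
    ultimately show ?thesis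
      using thue_morse_4k_2[of q] thue_morse_4k_3[of q] by (simp only:) simp
  qed
qed

lemmas thue_morse_2k = thue_morse_2k_and_2k_1[THEN conjunct1]
  and thue_morse_2k_1 = thue_morse_2k_and_2k_1[THEN conjunct2]

section \<open>Palindromic length of prefixes\<close>

(* h s ... h (e - 1) is a palindrome *)
definition palindromic_factor :: "(nat \<Rightarrow> 'a) \<Rightarrow> nat \<Rightarrow> nat \<Rightarrow> bool" where
  "palindromic_factor h s e \<longleftrightarrow>
     (\<forall>i j. s \<le> i \<longrightarrow> i < e \<longrightarrow> i + j + 1 = s + e \<longrightarrow> h i = h j)"

lemma palindrome_map_upt_iff: "palindrome (map h [s..<e]) \<longleftrightarrow> palindromic_factor h s e"
proof
  assume pal: "palindrome (map h [s..<e])"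
  show "palindromic_factor h s e"
    unfolding palindromic_factor_def
  proof (intro allI impI)
    fix i j assume ij: "s \<le> i" "i < e" "i + j + 1 = s + e"
    have "rev (map h [s..<e]) ! (e - 1 - i) = map h [s..<e] ! (e - 1 - i)"
      using pal by (simp add: palindrome_def)
    moreover have "j = s + e - Suc i"
      using ij by simp
    ultimately show "h i = h j"
      using ij by (simp add: rev_nth)
  qed
next
  assume "palindromic_factor h s e"
  then show "palindrome (map h [s..<e])"
    unfolding palindrome_def palindromic_factor_def
    by (intro nth_equalityI) (auto simp: rev_nth)
qed

lemma palindromic_factorD:
  "palindromic_factor h s e \<Longrightarrow> s \<le> i \<Longrightarrow> i < e \<Longrightarrow> i + j + 1 = s + e \<Longrightarrow> h i = h j"
  unfolding palindromic_factor_def by blast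

lemma palindromic_factor_singleton: "palindromic_factor h s (Suc s)"
  by (auto simp: palindromic_factor_def less_Suc_eq)

lemma palindromic_factor_shrink:
  "palindromic_factor h s e \<Longrightarrow> palindromic_factor h (s + k) (e - k)"
  unfolding palindromic_factor_def by auto

lemma pal_length_le:
  assumes "concat ps = w" "\<forall>p\<in>set ps. p \<noteq> [] \<and> palindrome p"
  shows "pal_length w \<le> length ps"
  unfolding pal_length_def using assms by (intro Least_le) blast

lemma pal_length_attained:
  "\<exists>ps. length ps = pal_length w \<and> concat ps = w \<and> (\<forall>p\<in>set ps. p \<noteq> [] \<and> palindrome p)"
proof -
  have "\<exists>ps. length ps = length w \<and> concat ps = w \<and> (\<forall>p\<in>set ps. p \<noteq> [] \<and> palindrome p)"
    by (intro exI[of _ "map (\<lambda>x. [x]) w"]) (auto simp: palindrome_def)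
  then have "\<exists>k ps. length ps = k \<and> concat ps = w \<and> (\<forall>p\<in>set ps. p \<noteq> [] \<and> palindrome p)"
    by blast
  then show ?thesis
    unfolding pal_length_def by (rule LeastI_ex)
qed

lemma pal_length_Nil: "pal_length [] = 0"
  using pal_length_le[of "[]" "[]"] by simp

lemma pal_length_append_palindrome:
  assumes "p \<noteq> []" "palindrome p"
  shows "pal_length (u @ p) \<le> pal_length u + 1"
proof -
  obtain ps where "length ps = pal_length u" "concat ps = u" "\<forall>q\<in>set ps. q \<noteq> [] \<and> palindrome q"
    using pal_length_attained by blast
  with assms show ?thesis
    using pal_length_le[of "ps @ [p]" "u @ p"] by auto
qed

lemma pal_length_last_palindrome:
  assumes "w \<noteq> []"
  shows "\<exists>u p. w = u @ p \<and> p \<noteq> [] \<and> palindrome p \<and> pal_length w = pal_length u + 1"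
proof -
  obtain ps where ps: "length ps = pal_length w" "concat ps = w" "\<forall>q\<in>set ps. q \<noteq> [] \<and> palindrome q"
    using pal_length_attained by blast
  have "ps \<noteq> []"
    using ps assms by auto
  then obtain qs p where qs: "ps = qs @ [p]"
    by (cases ps rule: rev_cases) auto
  have w: "w = concat qs @ p" and p: "p \<noteq> []" "palindrome p"
    using ps(2,3) qs by simp_all
  have "pal_length (concat qs) \<le> length qs"
    using ps(3) qs by (intro pal_length_le) simp_all
  moreover have "pal_length w \<le> pal_length (concat qs) + 1"
    using w pal_length_append_palindrome[OF p, of "concat qs"] by simp
  moreover have "length qs + 1 = pal_length w"
    using ps(1) qs by simp
  ultimately have "pal_length w = pal_length (concat qs) + 1"
    by linarith
  with w p show ?thesis by blast
qed

lemma pal_length_prefix_extend: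
  assumes "s < e" "palindromic_factor h s e"
  shows "pal_length (map h [0..<e]) \<le> pal_length (map h [0..<s]) + 1"
proof -
  have "map h [0..<e] = map h [0..<s] @ map h [s..<e]"
    using assms(1) upt_add_eq_append[of 0 s "e - s"] by simp
  then show ?thesis
    using assms pal_length_append_palindrome[of "map h [s..<e]" "map h [0..<s]"]
    by (simp add: palindrome_map_upt_iff)
qed

lemma pal_length_prefix_last:
  assumes "0 < e"
  shows "\<exists>s<e. palindromic_factor h s e \<and>
    pal_length (map h [0..<e]) = pal_length (map h [0..<s]) + 1"
proof -
  obtain u p where up: "map h [0..<e] = u @ p" "p \<noteq> []" "palindrome p"
    "pal_length (map h [0..<e]) = pal_length u + 1"
    using assms pal_length_last_palindrome[of "map h [0..<e]"] by auto
  define s where "s = length u"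
  have "s < e"
    using up(2) arg_cong[OF up(1), of length] by (simp add: s_def)
  moreover have "u = map h [0..<s]" "p = map h [s..<e]"
    using \<open>s < e\<close> arg_cong[OF up(1), of "take s"] arg_cong[OF up(1), of "drop s"]
    by (simp_all add: s_def take_map drop_map)
  ultimately show ?thesis
    using up by (auto simp: palindrome_map_upt_iff)
qed

lemma le_pal_length_prefix:
  fixes F :: "nat \<Rightarrow> int"
  assumes "F 0 \<le> 0"
    and "\<And>s e. s < e \<Longrightarrow> palindromic_factor h s e \<Longrightarrow> F e \<le> F s + 1"
  shows "F n \<le> int (pal_length (map h [0..<n]))"
proof (induction n rule: less_induct)
  case (less n)
  show ?case
  proof (cases "n = 0")
    case True
    with assms(1) show ?thesis by simp
  next
    case False
    then obtain s where "s < n" "palindromic_factor h s n"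
      "pal_length (map h [0..<n]) = pal_length (map h [0..<s]) + 1"
      using pal_length_prefix_last by blast
    with assms(2) less show ?thesis by fastforce
  qed
qed

section \<open>Palindromes in the Thue--Morse word\<close>

abbreviation tm_pal :: "nat \<Rightarrow> nat \<Rightarrow> bool" where
  "tm_pal \<equiv> palindromic_factor thue_morse"

lemma thue_morse_no_triple:
  "\<not> (thue_morse k = thue_morse (k + 1) \<and> thue_morse (k + 1) = thue_morse (k + 2))"
proof (cases "even k")
  case True
  then obtain q where "k = 2 * q" by blast
  then show ?thesis using thue_morse_2k[of q] thue_morse_2k_1[of q] by auto
next
  case False
  then obtain q where "k = 2 * q + 1" by (blast elim: oddE)
  then show ?thesis using thue_morse_2k[of "q + 1"] thue_morse_2k_1[of "q + 1"] by simp
qed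

lemma tm_pal_even_center:
  assumes "tm_pal s (s + 2 * m)" "0 < m"
  shows "even (s + m)"
proof (rule ccontr)
  assume "odd (s + m)"
  then obtain q where q: "s + m = 2 * q + 1" by (blast elim: oddE)
  have "thue_morse (2 * q) = thue_morse (2 * q + 1)"
    using assms q by (intro palindromic_factorD[OF assms(1)]) auto
  then show False
    using thue_morse_2k[of q] thue_morse_2k_1[of q] by simp
qed

(* Via t (2k) = t k and t (2k + 1) = \<not> t k, a palindrome of length 5 would force
   t i = t (i + 1) = t (i + 2) for some i. *)
lemma tm_pal_odd_short:
  assumes "tm_pal s (s + 2 * m + 1)"
  shows "m < 2"
proof (rule ccontr)
  assume "\<not> m < 2"
  have mirror: "thue_morse x = thue_morse y"
    if "x + y = 2 * (s + m)" "s + m - 2 \<le> x" "x \<le> s + m" for x y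
    using that \<open>\<not> m < 2\<close> by (intro palindromic_factorD[OF assms]) auto
  define i where "i = (s + m - 2) div 2"
  have "s + m = 2 * i + 2 \<or> s + m = 2 * i + 3"
    using \<open>\<not> m < 2\<close> unfolding i_def by presburger
  then have "thue_morse i = thue_morse (i + 1) \<and> thue_morse (i + 1) = thue_morse (i + 2)"
  proof
    assume c: "s + m = 2 * i + 2"
    have "thue_morse (2 * i + 1) = thue_morse (2 * (i + 1) + 1)"
      "thue_morse (2 * i) = thue_morse (2 * (i + 2))"
      using c by (intro mirror; simp)+
    then show ?thesis
      by (simp only: thue_morse_2k thue_morse_2k_1) blast
  next
    assume c: "s + m = 2 * i + 3"
    have "thue_morse (2 * (i + 1)) = thue_morse (2 * (i + 2))"
      "thue_morse (2 * i + 1) = thue_morse (2 * (i + 2) + 1)"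
      using c by (intro mirror; simp)+
    then show ?thesis
      by (simp only: thue_morse_2k thue_morse_2k_1) blast
  qed
  then show False
    using thue_morse_no_triple by blast
qed

lemma tm_pal_long_center:
  assumes "tm_pal s e" "s + 4 \<le> e"
  shows "4 dvd (s + e)"
proof (cases "even (e - s)")
  case True
  then obtain m where "e - s = 2 * m" by (blast elim: evenE)
  with assms(2) have m: "e = s + 2 * m" by simp
  then have "even (s + m)"
    using assms tm_pal_even_center[of s m] by simp
  then obtain k where "s + m = 2 * k" by blast
  with m have "s + e = 4 * k" by simp
  then show ?thesis by simp
next
  case False
  then obtain m where "e - s = 2 * m + 1" by (blast elim: oddE)
  with assms(2) have "e = s + 2 * m + 1" by simp
  with assms show ?thesis
    using tm_pal_odd_short[of s m] by simp
qed

lemma tm_pal_4: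
  assumes "tm_pal s e"
  shows "tm_pal (4 * s) (4 * e)"
  unfolding palindromic_factor_def
proof (intro allI impI)
  fix i j assume ij: "4 * s \<le> i" "i < 4 * e" "i + j + 1 = 4 * s + 4 * e"
  define q r where "q = i div 4" and "r = i mod 4"
  have i: "i = 4 * q + r" "r < 4"
    unfolding q_def r_def by simp_all
  have j: "j = 4 * (s + e - 1 - q) + (3 - r)"
    using ij i by simp
  have "thue_morse q = thue_morse (s + e - 1 - q)"
    using ij i by (intro palindromic_factorD[OF assms]) simp_all
  moreover have "r = 0 \<or> r = 1 \<or> r = 2 \<or> r = 3"
    using i(2) by linarith
  ultimately show "thue_morse i = thue_morse j"
    unfolding i(1) j using thue_morse_4k_plus[of r q] thue_morse_4k_plus[of "3 - r" "s + e - 1 - q"]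
    by auto
qed

lemma tm_pal_desubst:
  assumes "tm_pal s e" "s + e = 4 * (a + b)" "s \<le> 4 * a + 3" "a \<le> b"
  shows "tm_pal a b"
  unfolding palindromic_factor_def
proof (intro allI impI)
  fix i j assume ij: "a \<le> i" "i < b" "i + j + 1 = a + b"
  show "thue_morse i = thue_morse j"
  proof (cases "s \<le> 4 * i")
    case True
    have "thue_morse (4 * i) = thue_morse (4 * j + 3)"
      using ij True assms(2,3) by (intro palindromic_factorD[OF assms(1)]) auto
    then show ?thesis
      by (simp only: thue_morse_4k thue_morse_4k_3)
  next
    case False
    then have "i = a"
      using ij assms(3) by simp
    show ?thesis
    proof (cases "j = i")
      case False
      with \<open>i = a\<close> ij have "a + 2 \<le> b" by simp
      have "thue_morse (4 * i + 3) = thue_morse (4 * j)"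
        using ij \<open>i = a\<close> \<open>a + 2 \<le> b\<close> \<open>\<not> s \<le> 4 * i\<close> assms(2,3)
        by (intro palindromic_factorD[OF assms(1)]) auto
      then show ?thesis
        by (simp only: thue_morse_4k thue_morse_4k_3)
    qed simp
  qed
qed

section \<open>A recursion for the palindromic length\<close>

function ppl_rec :: "nat \<Rightarrow> int" where
  "ppl_rec n =
    (if n = 0 then 0
     else if n mod 4 = 0 then ppl_rec (n div 4)
     else if n mod 4 = 1 then ppl_rec (n div 4) + 1
     else if n mod 4 = 2 then min (ppl_rec (n div 4)) (ppl_rec (n div 4 + 1)) + 2
     else ppl_rec (n div 4 + 1) + 1)"
  by auto
termination
  by (relation "measure id") auto

declare ppl_rec.simps [simp del]

lemma ppl_rec_0: "ppl_rec 0 = 0"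
  by (simp add: ppl_rec.simps)

lemma ppl_rec_4n: "ppl_rec (4 * n) = ppl_rec n"
  by (cases "n = 0") (simp_all add: ppl_rec.simps[of "4 * n"] ppl_rec_0)

lemma ppl_rec_4n_plus:
  assumes "0 < r" "r < 4"
  shows "ppl_rec (4 * n + r) =
    (if r = 1 then ppl_rec n + 1
     else if r = 2 then min (ppl_rec n) (ppl_rec (n + 1)) + 2
     else ppl_rec (n + 1) + 1)"
proof -
  have div_mod: "(4 * n + r) div 4 = n" "(4 * n + r) mod 4 = r"
    using assms(2) by simp_all
  show ?thesis
    by (subst ppl_rec.simps, simp only: div_mod) (use assms in simp)
qed

lemma ppl_rec_4n_1: "ppl_rec (4 * n + 1) = ppl_rec n + 1"
  and ppl_rec_4n_2: "ppl_rec (4 * n + 2) = min (ppl_rec n) (ppl_rec (n + 1)) + 2"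
  and ppl_rec_4n_3: "ppl_rec (4 * n + 3) = ppl_rec (n + 1) + 1"
  using ppl_rec_4n_plus[of 1 n] ppl_rec_4n_plus[of 2 n] ppl_rec_4n_plus[of 3 n] by simp_all

lemmas ppl_rec_simps [simp] =
  ppl_rec_0 ppl_rec_4n ppl_rec_4n_1 ppl_rec_4n_2 ppl_rec_4n_3
  ppl_rec_4n_1[simplified] ppl_rec_4n_2[simplified] ppl_rec_4n_3[unfolded numeral_3_eq_3, simplified]

lemma nat_mod4_cases:
  fixes n :: nat
  obtains q where "n = 4 * q" | q where "n = 4 * q + 1" | q where "n = 4 * q + 2"
    | q where "n = 4 * q + 3"
proof -
  have "n mod 4 = 0 \<or> n mod 4 = 1 \<or> n mod 4 = 2 \<or> n mod 4 = 3"
    by linarith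
  then show ?thesis
    using that div_mod_decomp[of n 4] by (metis add_0_right mult.commute)
qed

lemma ppl_rec_Suc_diff_abs_le: "\<bar>ppl_rec (Suc n) - ppl_rec n\<bar> \<le> 1"
proof (induction n rule: less_induct)
  case (less n)
  show ?case
  proof (cases n rule: nat_mod4_cases)
    case (1 q)
    then show ?thesis by simp
  next
    case (2 q)
    then show ?thesis
      using less[of q] by simp
  next
    case (3 q)
    then show ?thesis
      using less[of q] by simp
  next
    case (4 q)
    then show ?thesis
      using ppl_rec_4n[of "q + 1"] by simp
  qed
qed

lemma ppl_rec_short_pal:
  assumes pal: "tm_pal s e" and "s < e" "e \<le> s + 3"
  shows "ppl_rec e \<le> ppl_rec s + 1"
proof -
  consider "e = s + 1" | "e = s + 2" | "e = s + 3"
    using assms(2,3) by linarith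
  then show ?thesis
  proof cases
    case 1
    then show ?thesis using ppl_rec_Suc_diff_abs_le[of s] by simp
  next
    case 2
    have "thue_morse s = thue_morse (s + 1)"
      using 2 by (intro palindromic_factorD[OF pal]) auto
    then show ?thesis
    proof (cases s rule: nat_mod4_cases)
      case (2 q)
      with \<open>e = s + 2\<close> have "e = 4 * q + 3" by simp
      with 2 show ?thesis
        using ppl_rec_Suc_diff_abs_le[of q] by simp
    next
      case (4 q)
      with \<open>e = s + 2\<close> have "e = 4 * (q + 1) + 1" by simp
      with 4 show ?thesis
        using ppl_rec_4n_1[of "q + 1"] by simp
    qed simp_all
  next
    case 3
    have "thue_morse s = thue_morse (s + 2)"
      using 3 by (intro palindromic_factorD[OF pal]) auto
    then show ?thesis
    proof (cases s rule: nat_mod4_cases)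
      case (3 q)
      with \<open>e = s + 3\<close> have "e = 4 * (q + 1) + 1" by simp
      with 3 show ?thesis
        using ppl_rec_4n_1[of "q + 1"] ppl_rec_Suc_diff_abs_le[of q] by simp
    next
      case (4 q)
      with \<open>e = s + 3\<close> have "e = 4 * (q + 1) + 2" by simp
      with 4 show ?thesis
        using ppl_rec_4n_2[of "q + 1"] by simp
    qed simp_all
  qed
qed

lemma ppl_rec_long_pal:
  assumes pal: "tm_pal s e" and long: "s + 4 \<le> e"
    and IH: "\<And>a b. a \<le> b \<Longrightarrow> tm_pal a b \<Longrightarrow> b - a < e - s \<Longrightarrow> ppl_rec b \<le> ppl_rec a + 1"
  shows "ppl_rec e \<le> ppl_rec s + 1"
proof -
  obtain c where c: "s + e = 4 * c"
    using tm_pal_long_center[OF pal long] by blast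
  show ?thesis
  proof (cases s rule: nat_mod4_cases)
    case (1 a)
    define b where "b = c - a"
    have e: "e = 4 * b" and "a < b"
      using c long 1 by (simp_all add: b_def)
    have "tm_pal a b"
      using c 1 e \<open>a < b\<close> by (intro tm_pal_desubst[OF pal]) simp_all
    then have "ppl_rec b \<le> ppl_rec a + 1"
      using \<open>a < b\<close> 1 e by (intro IH) simp_all
    then show ?thesis
      using 1 e by simp
  next
    case (2 a)
    define b where "b = c - a - 1"
    have e: "e = 4 * b + 3" and "a < b"
      using c long 2 by (simp_all add: b_def)
    have "tm_pal a (b + 1)"
      using c 2 e \<open>a < b\<close> by (intro tm_pal_desubst[OF pal]) simp_all
    then have "ppl_rec (b + 1) \<le> ppl_rec a + 1"
      using \<open>a < b\<close> 2 e by (intro IH) simp_all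
    then show ?thesis
      using 2 e by simp
  next
    case (3 a)
    define b where "b = c - a - 1"
    have e: "e = 4 * b + 2" and "a < b"
      using c long 3 by (simp_all add: b_def)
    have "tm_pal a (b + 1)" "tm_pal (a + 1) b"
      using c 3 e \<open>a < b\<close> by (intro tm_pal_desubst[OF pal]; simp)+
    then have "ppl_rec (b + 1) \<le> ppl_rec a + 1" "ppl_rec b \<le> ppl_rec (a + 1) + 1"
      using \<open>a < b\<close> 3 e by (intro IH; simp)+
    then show ?thesis
      using 3 e by simp
  next
    case (4 a)
    define b where "b = c - a - 1"
    have e: "e = 4 * b + 1" and "a < b"
      using c long 4 by (simp_all add: b_def)
    have "tm_pal (a + 1) b"
      using c 4 e \<open>a < b\<close> by (intro tm_pal_desubst[OF pal]) simp_all
    then have "ppl_rec b \<le> ppl_rec (a + 1) + 1"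
      using \<open>a < b\<close> 4 e by (intro IH) simp_all
    then show ?thesis
      using 4 e by simp
  qed
qed

lemma ppl_rec_pal_step: "tm_pal s e \<Longrightarrow> s < e \<Longrightarrow> ppl_rec e \<le> ppl_rec s + 1"
proof (induction "e - s" arbitrary: s e rule: less_induct)
  case less
  show ?case
  proof (cases "s + 4 \<le> e")
    case True
    show ?thesis
    proof (rule ppl_rec_long_pal[OF less.prems(1) True])
      fix a b assume "a \<le> b" "tm_pal a b" "b - a < e - s"
      then show "ppl_rec b \<le> ppl_rec a + 1"
        using less.hyps by (cases "a = b") simp_all
    qed
  next
    case False
    then show ?thesis
      using less.prems by (intro ppl_rec_short_pal) simp_all
  qed
qed

lemma PPL_t_altdef: "PPL_t n = int (pal_length (map thue_morse [0..<n]))"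
  by (simp add: PPL_t_def tm_prefix_def)

lemma PPL_t_0: "PPL_t 0 = 0"
  by (simp add: PPL_t_altdef pal_length_Nil)

lemma PPL_t_pal_step: "s < e \<Longrightarrow> tm_pal s e \<Longrightarrow> PPL_t e \<le> PPL_t s + 1"
  unfolding PPL_t_altdef using pal_length_prefix_extend[of s e thue_morse] by simp

lemma PPL_t_last_pal:
  assumes "0 < e"
  shows "\<exists>s<e. tm_pal s e \<and> PPL_t e = PPL_t s + 1"
proof -
  obtain s where "s < e" "tm_pal s e"
    "pal_length (map thue_morse [0..<e]) = pal_length (map thue_morse [0..<s]) + 1"
    using pal_length_prefix_last[OF assms] by blast
  then show ?thesis
    unfolding PPL_t_altdef by auto
qed

lemma ppl_rec_le_PPL_t: "ppl_rec n \<le> PPL_t n"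
  unfolding PPL_t_altdef using ppl_rec_pal_step by (intro le_pal_length_prefix) simp_all

lemma PPL_t_4n_le: "PPL_t (4 * n) \<le> PPL_t n"
proof (induction n rule: less_induct)
  case (less n)
  show ?case
  proof (cases "n = 0")
    case False
    then obtain s where "s < n" "tm_pal s n" "PPL_t n = PPL_t s + 1"
      using PPL_t_last_pal by blast
    moreover have "PPL_t (4 * n) \<le> PPL_t (4 * s) + 1"
      using calculation by (intro PPL_t_pal_step tm_pal_4) simp_all
    ultimately show ?thesis
      using less[of s] by simp
  qed simp
qed

lemma PPL_t_4n_1_le: "PPL_t (4 * n + 1) \<le> PPL_t n + 1"
  using PPL_t_pal_step[of "4 * n" "4 * n + 1"] PPL_t_4n_le[of n]
  by (simp add: palindromic_factor_singleton)

lemma PPL_t_4n_3_le: "PPL_t (4 * n + 3) \<le> PPL_t (n + 1) + 1"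
proof -
  obtain s where s: "s < n + 1" "tm_pal s (n + 1)" "PPL_t (n + 1) = PPL_t s + 1"
    using PPL_t_last_pal[of "n + 1"] by auto
  have "tm_pal (4 * s + 1) (4 * n + 3)"
    using palindromic_factor_shrink[OF tm_pal_4[OF s(2)], of 1] by (simp add: add.commute)
  then have "PPL_t (4 * n + 3) \<le> PPL_t (4 * s + 1) + 1"
    using s(1) by (intro PPL_t_pal_step) simp_all
  with PPL_t_4n_1_le[of s] s(3) show ?thesis
    by simp
qed

lemma PPL_t_4n_2_le: "PPL_t (4 * n + 2) \<le> min (PPL_t n) (PPL_t (n + 1)) + 2"
proof -
  have via_n: "PPL_t (4 * n + 2) \<le> PPL_t n + 2"
    using PPL_t_pal_step[of "4 * n + 1" "4 * n + 2"] PPL_t_4n_1_le[of n]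
    by (simp add: palindromic_factor_singleton)
  obtain s where s: "s < n + 1" "tm_pal s (n + 1)" "PPL_t (n + 1) = PPL_t s + 1"
    using PPL_t_last_pal[of "n + 1"] by auto
  have "PPL_t (4 * n + 2) \<le> PPL_t (n + 1) + 2"
  proof (cases "s = n")
    case True
    with via_n s(3) show ?thesis by simp
  next
    case False
    have "tm_pal (4 * s + 2) (4 * n + 2)"
      using palindromic_factor_shrink[OF tm_pal_4[OF s(2)], of 2] by simp
    then have "PPL_t (4 * n + 2) \<le> PPL_t (4 * s + 2) + 1"
      using s(1) False by (intro PPL_t_pal_step) simp_all
    moreover have "PPL_t (4 * s + 2) \<le> PPL_t s + 2"
      using PPL_t_pal_step[of "4 * s + 1" "4 * s + 2"] PPL_t_4n_1_le[of s]
      by (simp add: palindromic_factor_singleton)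
    ultimately show ?thesis
      using s(3) by simp
  qed
  with via_n show ?thesis by simp
qed

lemma PPL_t_le_ppl_rec: "PPL_t n \<le> ppl_rec n"
proof (induction n rule: less_induct)
  case (less n)
  show ?case
  proof (cases n rule: nat_mod4_cases)
    case (1 q)
    then show ?thesis
      using less[of q] PPL_t_4n_le[of q] by (cases "q = 0") (simp_all add: PPL_t_0)
  next
    case (2 q)
    then show ?thesis
      using less[of q] PPL_t_4n_1_le[of q] by simp
  next
    case (3 q)
    then show ?thesis
      using less[of q] less[of "q + 1"] PPL_t_4n_2_le[of q] by simp
  next
    case (4 q)
    then show ?thesis
      using less[of "q + 1"] PPL_t_4n_3_le[of q] by simp
  qed
qed

lemma PPL_t_eq_ppl_rec: "PPL_t = ppl_rec"
  by (rule ext, rule antisym) (simp_all add: PPL_t_le_ppl_rec ppl_rec_le_PPL_t)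

section \<open>Regularity\<close>

definition is_lincomb :: "(nat \<Rightarrow> int) set \<Rightarrow> (nat \<Rightarrow> int) \<Rightarrow> bool" where
  "is_lincomb S a \<longleftrightarrow> (\<exists>c. \<forall>n. a n = (\<Sum>s\<in>S. c s * s n))"

lemma k_regular_iff_lincomb:
  "k_regular k a \<longleftrightarrow>
    (\<exists>S. finite S \<and> (\<forall>i b. b < k ^ i \<longrightarrow> is_lincomb S (\<lambda>n. a (k ^ i * n + b))))"
  by (simp add: k_regular_def is_lincomb_def)

lemma is_lincomb_mem:
  assumes "finite S" "s \<in> S"
  shows "is_lincomb S s"
proof -
  have "(\<Sum>t\<in>S. (if t = s then 1 else 0) * t n) = s n" for n
    using assms by (simp add: if_distrib[of "\<lambda>x. x * _"] cong: if_cong)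
  then show ?thesis
    unfolding is_lincomb_def by (intro exI[of _ "\<lambda>t. if t = s then 1 else 0"]) simp
qed

lemma is_lincomb_add:
  assumes "is_lincomb S a" "is_lincomb S b"
  shows "is_lincomb S (\<lambda>n. a n + b n)"
proof -
  obtain c d where "\<forall>n. a n = (\<Sum>s\<in>S. c s * s n)" "\<forall>n. b n = (\<Sum>s\<in>S. d s * s n)"
    using assms unfolding is_lincomb_def by blast
  then show ?thesis
    unfolding is_lincomb_def
    by (intro exI[of _ "\<lambda>s. c s + d s"]) (simp add: distrib_right sum.distrib)
qed

lemma is_lincomb_scale:
  assumes "is_lincomb S a"
  shows "is_lincomb S (\<lambda>n. x * a n)"
proof -
  obtain c where "\<forall>n. a n = (\<Sum>s\<in>S. c s * s n)"
    using assms unfolding is_lincomb_def by blast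
  then show ?thesis
    unfolding is_lincomb_def
    by (intro exI[of _ "\<lambda>s. x * c s"]) (simp add: sum_distrib_left mult.assoc)
qed

lemma is_lincomb_sum:
  assumes "finite V" "\<And>v. v \<in> V \<Longrightarrow> is_lincomb S (h v)"
  shows "is_lincomb S (\<lambda>n. \<Sum>v\<in>V. h v n)"
  using assms
proof (induction V rule: finite_induct)
  case empty
  show ?case
    unfolding is_lincomb_def by (intro exI[of _ "\<lambda>_. 0"]) simp
next
  case (insert v V)
  then show ?case
    using is_lincomb_add[of S "h v" "\<lambda>n. \<Sum>v\<in>V. h v n"] by simp
qed

lemma kernel_affine_in_state:
  fixes a :: "nat \<Rightarrow> int" and g :: "nat \<Rightarrow> 'v"
  assumes step: "\<And>r. r < k \<Longrightarrow>
      \<exists>\<rho> \<chi>. \<forall>n. a (k * n + r) = a n + \<rho> (g n) \<and> g (k * n + r) = \<chi> (g n)"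
    and "b < k ^ i"
  shows "\<exists>\<psi> \<chi>. \<forall>n. a (k ^ i * n + b) = a n + \<psi> (g n) \<and> g (k ^ i * n + b) = \<chi> (g n)"
  using assms(2)
proof (induction i arbitrary: b)
  case 0
  then show ?case
    by (intro exI[of _ "\<lambda>_. 0"] exI[of _ id]) simp
next
  case (Suc i)
  have "k > 0"
    using Suc.prems by (cases k) simp_all
  define q r where "q = b div k" and "r = b mod k"
  have "r < k" "q < k ^ i"
    using \<open>k > 0\<close> Suc.prems by (simp_all add: q_def r_def less_mult_imp_div_less mult.commute)
  obtain \<psi> \<chi> where IH: "\<forall>n. a (k ^ i * n + q) = a n + \<psi> (g n) \<and> g (k ^ i * n + q) = \<chi> (g n)"
    using Suc.IH[OF \<open>q < k ^ i\<close>] by blast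
  obtain \<rho> \<chi>' where R: "\<forall>n. a (k * n + r) = a n + \<rho> (g n) \<and> g (k * n + r) = \<chi>' (g n)"
    using step[OF \<open>r < k\<close>] by blast
  have split: "k ^ Suc i * n + b = k * (k ^ i * n + q) + r" for n
    by (simp add: q_def r_def algebra_simps)
  show ?case
    by (intro exI[of _ "\<lambda>v. \<psi> v + \<rho> (\<chi> v)"] exI[of _ "\<lambda>v. \<chi>' (\<chi> v)"])
      (simp only: split, simp add: R IH)
qed

lemma k_regular_if_affine_in_finite_state:
  fixes a :: "nat \<Rightarrow> int" and g :: "nat \<Rightarrow> 'v"
  assumes fin: "finite (range g)"
    and step: "\<And>r. r < k \<Longrightarrow>
      \<exists>\<rho> \<chi>. \<forall>n. a (k * n + r) = a n + \<rho> (g n) \<and> g (k * n + r) = \<chi> (g n)"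
  shows "k_regular k a"
proof -
  define ind where "ind v n = (if g n = v then 1 else 0 :: int)" for v n
  define S where "S = insert a (ind ` range g)"
  have "finite S"
    using fin by (simp add: S_def)
  have "is_lincomb S (\<lambda>n. a (k ^ i * n + b))" if b: "b < k ^ i" for i b
  proof -
    obtain \<psi> where \<psi>: "\<forall>n. a (k ^ i * n + b) = a n + \<psi> (g n)"
      using kernel_affine_in_state[OF step b] by blast
    have "\<psi> (g n) = (\<Sum>v\<in>range g. \<psi> v * ind v n)" for n
      using fin by (simp add: ind_def if_distrib[of "\<lambda>x. _ * x"] cong: if_cong)
    then have "(\<lambda>n. a (k ^ i * n + b)) = (\<lambda>n. a n + (\<Sum>v\<in>range g. \<psi> v * ind v n))"
      using \<psi> by simp
    moreover have "is_lincomb S (\<lambda>n. a n + (\<Sum>v\<in>range g. \<psi> v * ind v n))"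
      using fin \<open>finite S\<close>
      by (intro is_lincomb_add is_lincomb_sum is_lincomb_scale is_lincomb_mem) (auto simp: S_def)
    ultimately show ?thesis
      by simp
  qed
  with \<open>finite S\<close> show ?thesis
    unfolding k_regular_iff_lincomb by blast
qed

definition ppl_rec_diff :: "nat \<Rightarrow> int" where
  "ppl_rec_diff n = ppl_rec (Suc n) - ppl_rec n"

lemma finite_range_ppl_rec_diff: "finite (range ppl_rec_diff)"
proof (rule finite_subset)
  have "ppl_rec_diff n \<in> {-1, 0, 1}" for n
    using ppl_rec_Suc_diff_abs_le[of n] unfolding ppl_rec_diff_def
    by (simp only: insert_iff empty_iff) arith
  then show "range ppl_rec_diff \<subseteq> {-1, 0, 1}"
    by blast
qed simp

lemma ppl_rec_affine_step:
  assumes "r < 4"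
  shows "\<exists>\<rho> \<chi>. \<forall>n. ppl_rec (4 * n + r) = ppl_rec n + \<rho> (ppl_rec_diff n)
    \<and> ppl_rec_diff (4 * n + r) = \<chi> (ppl_rec_diff n)"
proof -
  consider "r = 0" | "r = 1" | "r = 2" | "r = 3"
    using assms by linarith
  then show ?thesis
  proof cases
    case 1
    show ?thesis
      by (intro exI[of _ "\<lambda>_. 0"] exI[of _ "\<lambda>_. 1"]) (simp add: 1 ppl_rec_diff_def)
  next
    case 2
    show ?thesis
      by (intro exI[of _ "\<lambda>_. 1"] exI[of _ "\<lambda>x. min 0 x + 1"]) (auto simp: 2 ppl_rec_diff_def)
  next
    case 3
    show ?thesis
      by (intro exI[of _ "\<lambda>x. min 0 x + 2"] exI[of _ "\<lambda>x. max x 0 - 1"])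
        (auto simp: 3 ppl_rec_diff_def)
  next
    case 4
    have "ppl_rec (Suc (4 * n + 3)) = ppl_rec (n + 1)" for n
      using ppl_rec_4n[of "n + 1"] by simp
    then show ?thesis
      by (intro exI[of _ "\<lambda>x. x + 1"] exI[of _ "\<lambda>_. -1"]) (simp add: 4 ppl_rec_diff_def)
  qed
qed

theorem corollary17:
  shows "k_regular 4 PPL_t"
  unfolding PPL_t_eq_ppl_rec
  using finite_range_ppl_rec_diff ppl_rec_affine_step
  by (rule k_regular_if_affine_in_finite_state)

end
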